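(* Fix an integer $q\ge 2$. For integers $n\ge 3$ let $S_1=\sqrt{q^2+4(q-1)(n-2)}$, $S_2=\sqrt{q^2+4(q-1)(n-3)}$, and let $c\in\left[0,(q-1)\left(1-\frac{2}{S_1+S_2}\right)\right)$ be such that $$s=\frac{S_1-n(q-2)+2c+q-4}{nq}\in T_n.$$ Then, as $n\to\infty$, $$A_q(n,s)\lesssim\frac{q(q-1)^2n^2}{2(q-c)},$$ i.e. $A_q(n,s)\le(1+o(1))\frac{q(q-1)^2n^2}{2(q-c)}$.
   Context: $T_n=\{-1+\frac{2i}{n}: i=0,1,\dots,n\}$. $A_q(n,s)$ is the maximum cardinality of a code $C$ in the $q$-ary Hamming space $\{0,\dots,q-1\}^n$ with $1-\frac{2d(x,y)}{n}\le s$ for all distinct $x,y\in C$, where $d$ is the Hamming distance. *)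

theory Defs
  imports Complex_Main
begin

definition hamming_space :: "nat \<Rightarrow> nat \<Rightarrow> nat list set" where
  "hamming_space q n = {x. length x = n \<and> (\<forall>i<n. x ! i < q)}"

definition hamming_dist :: "nat list \<Rightarrow> nat list \<Rightarrow> nat" where
  "hamming_dist x y = card {i. i < length x \<and> x ! i \<noteq> y ! i}"

definition T_set :: "nat \<Rightarrow> real set" where
  "T_set n = {-1 + 2 * real i / real n | i. i \<le> n}"

definition A_code :: "nat \<Rightarrow> nat \<Rightarrow> real \<Rightarrow> nat" where
  "A_code q n s = Max {card C | C. C \<subseteq> hamming_space q n \<and>
      (\<forall>x\<in>C. \<forall>y\<in>C. x \<noteq> y \<longrightarrow> 1 - 2 * real (hamming_dist x y) / real n \<le> s)}"

end

theory Submission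
  imports Defs
begin

(* Delsarte's linear programming bound with the polynomial F(t) = (t + n/q) (t - D) (t + D)^2 in the
   centred agreement count t = #{i. x_i = y_i} - n/q. The condition on s says that t <= D for
   distinct codewords, where F <= 0. Expanded in the positive semidefinite kernels given by the
   elementary symmetric functions of the centred agreements (the Krawtchouk polynomials), F has
   constant coefficient f0 and, once n is large, nonnegative higher coefficients, so |C| f0 <= F(n - n/q).
   The choice of D makes n a quadratic function of D, and in terms of D one finds
   f0 ~ 2 (q - c) D^4 / (q - 1) while F(n - n/q) ~ q (q - 1) n^2 D^4, uniformly in c. *)

definition agreements :: "nat \<Rightarrow> nat list \<Rightarrow> nat list \<Rightarrow> nat" where
  "agreements j x y = card {i. i < j \<and> x ! i = y ! i}"

definition centred_agreement :: "nat \<Rightarrow> nat \<Rightarrow> nat list \<Rightarrow> nat list \<Rightarrow> real" where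
  "centred_agreement q i x y = (if x ! i = y ! i then 1 else 0) - 1 / real q"

definition centred_agreements :: "nat \<Rightarrow> nat \<Rightarrow> nat list \<Rightarrow> nat list \<Rightarrow> real" where
  "centred_agreements q j x y = (\<Sum>i<j. centred_agreement q i x y)"

lemma agreements_Suc:
  "agreements (Suc j) x y = agreements j x y + (if x ! j = y ! j then 1 else 0)"
proof -
  have "{i. i < Suc j \<and> x ! i = y ! i} =
      {i. i < j \<and> x ! i = y ! i} \<union> (if x ! j = y ! j then {j} else {})"
    by (auto simp: less_Suc_eq)
  then show ?thesis
    unfolding agreements_def by (auto simp: card_insert_if)
qed

lemma centred_agreements_eq: "centred_agreements q j x y = real (agreements j x y) - real j / real q"
proof (induction j)
  case 0
  show ?case by (simp add: centred_agreements_def agreements_def)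
next
  case (Suc j)
  then show ?case
    by (simp add: centred_agreements_def agreements_Suc centred_agreement_def add_divide_distrib)
qed

lemma agreements_le: "agreements j x y \<le> j"
  unfolding agreements_def using card_mono[of "{..<j}" "{i. i < j \<and> x ! i = y ! i}"] by auto

lemma hamming_dist_eq_agreements:
  assumes "x \<in> hamming_space q n"
  shows "real (hamming_dist x y) = real n - real (agreements n x y)"
proof -
  have "{i. i < length x \<and> x ! i \<noteq> y ! i} = {..<n} - {i. i < n \<and> x ! i = y ! i}"
    using assms unfolding hamming_space_def by auto
  then have "hamming_dist x y = card ({..<n} - {i. i < n \<and> x ! i = y ! i})"
    unfolding hamming_dist_def by simp
  also have "\<dots> = n - agreements n x y"
    unfolding agreements_def by (subst card_Diff_subset) auto
  finally have "hamming_dist x y = n - agreements n x y" .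
  then show ?thesis
    using agreements_le[of n x y] by simp
qed

text \<open>The elementary symmetric functions of the centred agreements at the first j coordinates;
  up to normalisation they are the Krawtchouk polynomials of the Hamming scheme.\<close>
fun esym_kernel :: "nat \<Rightarrow> nat \<Rightarrow> nat \<Rightarrow> nat list \<Rightarrow> nat list \<Rightarrow> real" where
  "esym_kernel q 0 j x y = 1"
| "esym_kernel q (Suc k) 0 x y = 0"
| "esym_kernel q (Suc k) (Suc j) x y =
     esym_kernel q (Suc k) j x y + centred_agreement q j x y * esym_kernel q k j x y"

text \<open>If each of j numbers equals 1 - r or -r and their sum is t, then k! times their k-th
  elementary symmetric function is a polynomial in r, j and t, because every power sum is.\<close>
definition esym2 :: "real \<Rightarrow> real \<Rightarrow> real \<Rightarrow> real" where
  "esym2 r j t = t^2 + 2*t*r - t + j*r^2 - j*r"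

definition esym3 :: "real \<Rightarrow> real \<Rightarrow> real \<Rightarrow> real" where
  "esym3 r j t = t^3 + 6*t^2*r - 3*t^2 + 3*t*j*r^2 - 3*t*j*r + 6*t*r^2 - 6*t*r + 2*t
     + 4*j*r^3 - 6*j*r^2 + 2*j*r"

definition esym4 :: "real \<Rightarrow> real \<Rightarrow> real \<Rightarrow> real" where
  "esym4 r j t = t^4 + 12*t^3*r - 6*t^3 + 6*t^2*j*r^2 - 6*t^2*j*r + 36*t^2*r^2 - 36*t^2*r
     + 11*t^2 + 28*t*j*r^3 - 42*t*j*r^2 + 14*t*j*r + 24*t*r^3 - 36*t*r^2 + 24*t*r - 6*t
     + 3*j^2*r^4 - 6*j^2*r^3 + 3*j^2*r^2 + 18*j*r^4 - 36*j*r^3 + 24*j*r^2 - 6*j*r"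

lemma esym_step:
  fixes r j t a :: real
  assumes "a = 1 - r \<or> a = - r"
  shows "esym2 r (j + 1) (t + a) = esym2 r j t + 2 * a * t"
    and "esym3 r (j + 1) (t + a) = esym3 r j t + 3 * a * esym2 r j t"
    and "esym4 r (j + 1) (t + a) = esym4 r j t + 4 * a * esym3 r j t"
  using assms unfolding esym2_def esym3_def esym4_def by (elim disjE; algebra)+

lemma esym_kernel_closed_forms:
  fixes q j :: nat
  defines "r \<equiv> 1 / real q"
  shows "esym_kernel q 1 j x y = centred_agreements q j x y"
    and "2 * esym_kernel q 2 j x y = esym2 r (real j) (centred_agreements q j x y)"
    and "6 * esym_kernel q 3 j x y = esym3 r (real j) (centred_agreements q j x y)"
    and "24 * esym_kernel q 4 j x y = esym4 r (real j) (centred_agreements q j x y)"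
proof (induction j)
  case (Suc j)
  define a where "a = centred_agreement q j x y"
  define t where "t = centred_agreements q j x y"
  have "a = 1 - r \<or> a = - r"
    unfolding a_def centred_agreement_def r_def by auto
  note step = esym_step[OF this, of "real j" t]
  have IH: "esym_kernel q 1 j x y = t" "2 * esym_kernel q 2 j x y = esym2 r (real j) t"
    "6 * esym_kernel q 3 j x y = esym3 r (real j) t" "24 * esym_kernel q 4 j x y = esym4 r (real j) t"
    using Suc.IH unfolding t_def by simp_all
  have t_Suc: "centred_agreements q (Suc j) x y = t + a" and j_Suc: "real (Suc j) = real j + 1"
    unfolding t_def a_def centred_agreements_def by simp_all
  have "esym_kernel q 1 (Suc j) x y = esym_kernel q 1 j x y + a"
    and "esym_kernel q 2 (Suc j) x y = esym_kernel q 2 j x y + a * esym_kernel q 1 j x y"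
    and "esym_kernel q 3 (Suc j) x y = esym_kernel q 3 j x y + a * esym_kernel q 2 j x y"
    and "esym_kernel q 4 (Suc j) x y = esym_kernel q 4 j x y + a * esym_kernel q 3 j x y"
    unfolding a_def by (simp_all add: numeral_eq_Suc)
  then show "esym_kernel q 1 (Suc j) x y = centred_agreements q (Suc j) x y"
    and "2 * esym_kernel q 2 (Suc j) x y = esym2 r (real (Suc j)) (centred_agreements q (Suc j) x y)"
    and "6 * esym_kernel q 3 (Suc j) x y = esym3 r (real (Suc j)) (centred_agreements q (Suc j) x y)"
    and "24 * esym_kernel q 4 (Suc j) x y = esym4 r (real (Suc j)) (centred_agreements q (Suc j) x y)"
    unfolding t_Suc j_Suc step using IH by (simp_all add: algebra_simps)
qed (simp_all add: centred_agreements_def esym2_def esym3_def esym4_def numeral_eq_Suc)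

definition psd_kernel :: "'a set \<Rightarrow> ('a \<Rightarrow> 'a \<Rightarrow> real) \<Rightarrow> bool" where
  "psd_kernel H K \<longleftrightarrow>
     (\<forall>C w. finite C \<longrightarrow> C \<subseteq> H \<longrightarrow> 0 \<le> (\<Sum>x\<in>C. \<Sum>y\<in>C. w x * w y * K x y))"

lemma psd_kernel_one: "psd_kernel H (\<lambda>x y. 1)"
  unfolding psd_kernel_def by (simp add: sum_product[symmetric])

lemma psd_kernel_zero: "psd_kernel H (\<lambda>x y. 0)"
  unfolding psd_kernel_def by simp

lemma psd_kernel_add: "psd_kernel H K \<Longrightarrow> psd_kernel H L \<Longrightarrow> psd_kernel H (\<lambda>x y. K x y + L x y)"
  unfolding psd_kernel_def by (simp add: distrib_left sum.distrib add_nonneg_nonneg)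

lemma psd_kernel_sum_nonneg:
  assumes "psd_kernel H K" "finite C" "C \<subseteq> H"
  shows "0 \<le> (\<Sum>x\<in>C. \<Sum>y\<in>C. K x y)"
    using assms(1)[unfolded psd_kernel_def, rule_format, OF assms(2,3), of "\<lambda>_. 1"] by simp

text \<open>The centred agreement at coordinate i is the Gram kernel of the vectors
  (\<lambda>z. [x ! i = z] - 1/q), z < q, so multiplying by it preserves positive semidefiniteness
  (a Schur product argument).\<close>
lemma centred_agreement_gram:
  assumes "a < q" "b < q"
  shows "(if a = b then 1 else 0) - 1 / real q =
    (\<Sum>z<q. ((if a = z then 1 else 0) - 1 / real q) * ((if b = z then 1 else 0) - 1 / real q))"
proof -
  define r where "r = 1 / real q"
  define A where "A z = (if a = z then 1 else (0::real))" for z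
  define B where "B z = (if b = z then 1 else (0::real))" for z
  have "(\<Sum>z<q. (A z - r) * (B z - r)) = (\<Sum>z<q. A z * B z) - r * (\<Sum>z<q. A z) - r * (\<Sum>z<q. B z) + real q * r^2"
    by (simp add: algebra_simps sum.distrib sum_subtractf sum_distrib_left power2_eq_square)
  also have "\<dots> = (if a = b then 1 else 0) - r"
    using assms unfolding A_def B_def r_def by (simp add: power2_eq_square if_distrib[of "\<lambda>u. u * _"] cong: if_cong)
  finally show ?thesis
    unfolding A_def B_def r_def by simp
qed

lemma psd_kernel_mult_centred_agreement:
  assumes K: "psd_kernel (hamming_space q n) K" and i: "i < n"
  shows "psd_kernel (hamming_space q n) (\<lambda>x y. centred_agreement q i x y * K x y)"
  unfolding psd_kernel_def
proof (intro allI impI)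
  fix C :: "nat list set" and w :: "nat list \<Rightarrow> real"
  assume C: "finite C" "C \<subseteq> hamming_space q n"
  define u :: "nat \<Rightarrow> nat list \<Rightarrow> real" where "u z x = (if x ! i = z then 1 else 0) - 1 / real q" for z x
  have gram: "centred_agreement q i x y = (\<Sum>z<q. u z x * u z y)" if "x \<in> C" "y \<in> C" for x y
  proof -
    have "x ! i < q" "y ! i < q"
      using that C i unfolding hamming_space_def by auto
    then show ?thesis
      unfolding centred_agreement_def u_def by (rule centred_agreement_gram)
  qed
  have "(\<Sum>x\<in>C. \<Sum>y\<in>C. w x * w y * (centred_agreement q i x y * K x y)) =
        (\<Sum>x\<in>C. \<Sum>y\<in>C. \<Sum>z<q. (w x * u z x) * (w y * u z y) * K x y)"
  proof (intro sum.cong refl)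
    fix x y assume "x \<in> C" "y \<in> C"
    then show "w x * w y * (centred_agreement q i x y * K x y) =
        (\<Sum>z<q. (w x * u z x) * (w y * u z y) * K x y)"
      by (simp add: gram sum_distrib_left sum_distrib_right mult_ac)
  qed
  also have "\<dots> = (\<Sum>x\<in>C. \<Sum>z<q. \<Sum>y\<in>C. (w x * u z x) * (w y * u z y) * K x y)"
    by (rule sum.cong[OF refl], rule sum.swap)
  also have "\<dots> = (\<Sum>z<q. \<Sum>x\<in>C. \<Sum>y\<in>C. (w x * u z x) * (w y * u z y) * K x y)"
    by (rule sum.swap)
  also have "\<dots> \<ge> 0"
  proof (rule sum_nonneg)
    fix z
    show "0 \<le> (\<Sum>x\<in>C. \<Sum>y\<in>C. (w x * u z x) * (w y * u z y) * K x y)"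
      using K[unfolded psd_kernel_def, rule_format, OF C, of "\<lambda>x. w x * u z x"] by simp
  qed
  finally show "0 \<le> (\<Sum>x\<in>C. \<Sum>y\<in>C. w x * w y * (centred_agreement q i x y * K x y))" .
qed

lemma psd_esym_kernel: "j \<le> n \<Longrightarrow> psd_kernel (hamming_space q n) (esym_kernel q k j)"
proof (induction j arbitrary: k)
  case 0
  then show ?case
    by (cases k) (simp_all add: psd_kernel_one psd_kernel_zero)
next
  case (Suc j)
  then show ?case
    by (cases k)
      (simp_all add: psd_kernel_one psd_kernel_add psd_kernel_mult_centred_agreement)
qed

lemma finite_hamming_space: "finite (hamming_space q n)"
proof -
  have "hamming_space q n \<subseteq> {xs. set xs \<subseteq> {..<q} \<and> length xs = n}"
    unfolding hamming_space_def by (auto simp: in_set_conv_nth)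
  then show ?thesis
    by (rule finite_subset) (simp add: finite_lists_length_eq)
qed

text \<open>Delsarte's linear programming bound: F is expanded in the positive semidefinite
  kernels, and the double sum of F over the code is compared with its diagonal.\<close>
lemma delsarte_bound:
  fixes q n :: nat and F :: "real \<Rightarrow> real" and f0 f1 f2 f3 f4 :: real
  defines "r \<equiv> 1 / real q"
  assumes C: "C \<subseteq> hamming_space q n"
    and F: "\<And>t. F t = f0 + f1 * t + f2 * esym2 r (real n) t + f3 * esym3 r (real n) t
                        + f4 * esym4 r (real n) t"
    and coeffs: "0 \<le> f1" "0 \<le> f2" "0 \<le> f3" "0 \<le> f4"
    and nonpos: "\<And>x y. x \<in> C \<Longrightarrow> y \<in> C \<Longrightarrow> x \<noteq> y \<Longrightarrow> F (centred_agreements q n x y) \<le> 0"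
  shows "real (card C) * real (card C) * f0 \<le> real (card C) * F (real n - real n / real q)"
proof -
  have finC: "finite C"
    using C finite_hamming_space finite_subset by blast
  define S where "S k = (\<Sum>x\<in>C. \<Sum>y\<in>C. esym_kernel q k n x y)" for k
  have S: "0 \<le> S k" for k
    unfolding S_def using psd_esym_kernel[OF order_refl] finC C by (rule psd_kernel_sum_nonneg)
  have "F (centred_agreements q n x y) = f0 + f1 * esym_kernel q 1 n x y
      + f2 * (2 * esym_kernel q 2 n x y) + f3 * (6 * esym_kernel q 3 n x y)
      + f4 * (24 * esym_kernel q 4 n x y)" for x y
    unfolding F esym_kernel_closed_forms r_def ..
  then have expand: "(\<Sum>x\<in>C. \<Sum>y\<in>C. F (centred_agreements q n x y)) = real (card C) * real (card C) * f0
      + (f1 * S 1 + f2 * (2 * S 2) + f3 * (6 * S 3) + f4 * (24 * S 4))"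
    unfolding S_def by (simp add: sum.distrib sum_distrib_left)
  have tail: "0 \<le> f1 * S 1 + f2 * (2 * S 2) + f3 * (6 * S 3) + f4 * (24 * S 4)"
    using coeffs S by simp
  have row: "(\<Sum>y\<in>C. F (centred_agreements q n x y)) \<le> F (real n - real n / real q)"
    if x: "x \<in> C" for x
  proof -
    have "(\<Sum>y\<in>C. F (centred_agreements q n x y))
        = F (centred_agreements q n x x) + (\<Sum>y\<in>C - {x}. F (centred_agreements q n x y))"
      using finC x by (rule sum.remove)
    moreover have "(\<Sum>y\<in>C - {x}. F (centred_agreements q n x y)) \<le> 0"
      using nonpos x by (intro sum_nonpos) auto
    moreover have "centred_agreements q n x x = real n - real n / real q"
      by (simp add: centred_agreements_eq agreements_def)
    ultimately show ?thesis
      by simp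
  qed
  have "(\<Sum>x\<in>C. \<Sum>y\<in>C. F (centred_agreements q n x y)) \<le> (\<Sum>x\<in>C. F (real n - real n / real q))"
    using row by (rule sum_mono)
  then show ?thesis
    using expand tail by simp
qed

definition delsarte_coeff0 :: "real \<Rightarrow> real \<Rightarrow> real \<Rightarrow> real" where
  "delsarte_coeff0 n r D = 5*n^2*r^4 - n^2*r^3*D - 9*n^2*r^3 + n^2*r^2*D + 4*n^2*r^2 - 6*n*r^4
     + 2*n*r^3*D + 12*n*r^3 + n*r^2*D^2 - 3*n*r^2*D - 7*n*r^2 - n*r*D^3 - n*r*D^2 + n*r*D + n*r"

definition delsarte_coeff1 :: "real \<Rightarrow> real \<Rightarrow> real \<Rightarrow> real" where
  "delsarte_coeff1 n r D = - 3*n^2*r^3 + 3*n^2*r^2 + 26*n*r^3 - 5*n*r^2*D - 36*n*r^2 - n*r*D^2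
     + 4*n*r*D + 11*n*r - 24*r^3 + 6*r^2*D + 36*r^2 + 2*r*D^2 - 6*r*D - 14*r - D^3 - D^2 + D + 1"

definition delsarte_coeff2 :: "real \<Rightarrow> real \<Rightarrow> real \<Rightarrow> real" where
  "delsarte_coeff2 n r D = - 12*n*r^2 + n*r*D + 9*n*r + 36*r^2 - 6*r*D - 36*r - D^2 + 3*D + 7"

definition delsarte_coeff3 :: "real \<Rightarrow> real \<Rightarrow> real \<Rightarrow> real" where
  "delsarte_coeff3 n r D = n*r - 12*r + D + 6"

lemma delsarte_poly_expansion:
  fixes n r D t :: real
  shows "(t + n * r) * (t - D) * (t + D)^2 = delsarte_coeff0 n r D + delsarte_coeff1 n r D * t
     + delsarte_coeff2 n r D * esym2 r n t + delsarte_coeff3 n r D * esym3 r n t + esym4 r n t"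
  unfolding delsarte_coeff0_def delsarte_coeff1_def delsarte_coeff2_def delsarte_coeff3_def
    esym2_def esym3_def esym4_def
  by algebra

lemma delsarte_coeff3_nonneg:
  fixes n r D :: real
  assumes "0 \<le> n" "0 \<le> r" "r \<le> 1 / 2" "0 \<le> D"
  shows "0 \<le> delsarte_coeff3 n r D"
  using assms mult_nonneg_nonneg[of n r] unfolding delsarte_coeff3_def by linarith

lemma sum_atMost_2: "(\<Sum>i\<le>(2::nat). f i) = f 0 + f 1 + (f 2 :: real)"
  by (simp add: numeral_2_eq_2 atMost_Suc)

lemma sum_atMost_3: "(\<Sum>i\<le>(3::nat). f i) = f 0 + f 1 + f 2 + (f 3 :: real)"
  by (simp add: numeral_3_eq_3 numeral_2_eq_2 atMost_Suc)

lemma sum_powers_lower_bound: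
  fixes b :: "nat \<Rightarrow> real"
  assumes "1 \<le> D"
  shows "- (\<Sum>i\<le>k. \<bar>b i\<bar>) * D^k \<le> (\<Sum>i\<le>k. b i * D^i)"
proof -
  have "- \<bar>b i\<bar> * D^k \<le> b i * D^i" if "i \<le> k" for i
  proof -
    have "\<bar>b i\<bar> * D^i \<le> \<bar>b i\<bar> * D^k"
      using assms that by (intro mult_left_mono power_increasing) auto
    moreover have "- (\<bar>b i\<bar> * D^i) \<le> b i * D^i"
      using abs_ge_minus_self[of "b i * D^i"] assms by (simp add: abs_mult)
    ultimately show ?thesis
      by linarith
  qed
  then have "(\<Sum>i\<le>k. - \<bar>b i\<bar> * D^k) \<le> (\<Sum>i\<le>k. b i * D^i)"
    by (intro sum_mono) auto
  then show ?thesis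
    by (simp add: sum_distrib_right sum_negf)
qed

lemma dominant_term_nonneg:
  fixes b :: "nat \<Rightarrow> real"
  assumes "1 \<le> a" "1 \<le> D" "(\<Sum>i\<le>k. \<bar>b i\<bar>) \<le> D"
  shows "0 \<le> a * D^Suc k + (\<Sum>i\<le>k. b i * D^i)"
proof -
  have "(\<Sum>i\<le>k. \<bar>b i\<bar>) * D^k \<le> D * D^k"
    using assms by (intro mult_right_mono) auto
  also have "\<dots> \<le> a * D^Suc k"
    using assms by (simp add: mult_right_mono)
  finally show ?thesis
    using sum_powers_lower_bound[OF assms(2), of b k] by linarith
qed

lemma quartic_margin:
  fixes D K \<epsilon> :: real
  assumes "0 < \<epsilon>" "0 \<le> K" "1 \<le> D" "(89 + (1 + \<epsilon>) * K) / \<epsilon> \<le> D"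
  shows "(D + 2)^4 + (D + 2)^2 * D \<le> (1 + \<epsilon>) * (D^4 - K * D^3)"
proof -
  have D3: "1 \<le> D^3" "D^2 \<le> D^3" "D \<le> D^3"
    using assms(3) power_increasing[of 2 3 D] power_increasing[of 1 3 D] by (auto simp: one_le_power)
  have "(D + 2)^4 + (D + 2)^2 * D = D^4 + 9 * D^3 + 28 * D^2 + 36 * D + 16"
    by algebra
  also have "\<dots> \<le> D^4 + 89 * D^3"
    using D3 by linarith
  also have "\<dots> \<le> (1 + \<epsilon>) * (D^4 - K * D^3)"
  proof -
    have "89 + (1 + \<epsilon>) * K \<le> \<epsilon> * D"
      using assms(1,4) by (simp add: field_simps)
    then have "(89 + (1 + \<epsilon>) * K) * D^3 \<le> (\<epsilon> * D) * D^3"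
      using D3 assms(3) by (intro mult_right_mono) auto
    moreover have "(1 + \<epsilon>) * (D^4 - K * D^3) - (D^4 + 89 * D^3)
        = (\<epsilon> * D) * D^3 - (89 + (1 + \<epsilon>) * K) * D^3"
      by algebra
    ultimately show ?thesis
      by linarith
  qed
  finally show ?thesis .
qed

definition delsarte_param :: "real \<Rightarrow> real \<Rightarrow> real \<Rightarrow> real \<Rightarrow> bool" where
  "delsarte_param Q c n D \<longleftrightarrow> 4 * n * (Q - 1) = (2 * Q * D - (2 * c + Q - 4))^2 - Q^2 + 8 * (Q - 1)"

text \<open>Under delsarte_param, Q^4 (Q - 1)^2 times each coefficient is a polynomial in D whose
  leading coefficient is explicit; the remaining coefficients, listed by increasing degree, are
  polynomials in Q and c.\<close>
definition delsarte_tail0 :: "real \<Rightarrow> real \<Rightarrow> nat \<Rightarrow> real" where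
  "delsarte_tail0 Q c i =
    [4*c^4*Q^2 - 9*c^4*Q + 5*c^4 + 8*c^3*Q^3 - 50*c^3*Q^2 + 82*c^3*Q - 40*c^3 + 5*c^2*Q^4
       - 49*c^2*Q^3 + 176*c^2*Q^2 - 238*c^2*Q + 106*c^2 + c*Q^5 - 12*c*Q^4 + 67*c*Q^3
       - 194*c*Q^2 + 242*c*Q - 104*c + 2*Q^4 - 16*Q^3 + 54*Q^2 - 72*Q + 32,
     c^4*Q^2 - c^4*Q - 14*c^3*Q^3 + 26*c^3*Q^2 - 12*c^3*Q - 22*c^2*Q^4 + 137*c^2*Q^3
       - 213*c^2*Q^2 + 98*c^2*Q - 9*c*Q^5 + 90*c*Q^4 - 327*c*Q^3 + 434*c*Q^2 - 188*c*Q - Q^6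
       + 12*Q^5 - 65*Q^4 + 186*Q^3 - 228*Q^2 + 96*Q,
     - 4*c^3*Q^3 + 4*c^3*Q^2 + 17*c^2*Q^4 - 22*c^2*Q^3 + 5*c^2*Q^2 + 19*c*Q^5 - 118*c*Q^4
       + 171*c*Q^3 - 72*c*Q^2 + 4*Q^6 - 41*Q^5 + 149*Q^4 - 192*Q^3 + 80*Q^2,
     5*c^2*Q^4 - 5*c^2*Q^3 - 9*c*Q^5 + 7*c*Q^4 + 2*c*Q^3 - 5*Q^6 + 31*Q^5 - 42*Q^4 + 16*Q^3] ! i"

definition delsarte_tail1 :: "real \<Rightarrow> real \<Rightarrow> nat \<Rightarrow> real" where
  "delsarte_tail1 Q c i =
    [3*c^4*Q^2 - 3*c^4*Q + 6*c^3*Q^3 - 30*c^3*Q^2 + 24*c^3*Q + 14*c^2*Q^4 - 74*c^2*Q^3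
       + 146*c^2*Q^2 - 86*c^2*Q + 11*c*Q^5 - 91*c*Q^4 + 262*c*Q^3 - 334*c*Q^2 + 152*c*Q + Q^6
       - 16*Q^5 + 87*Q^4 - 204*Q^3 + 220*Q^2 - 88*Q,
     - 12*c^3*Q^3 + 12*c^3*Q^2 - 14*c^2*Q^4 + 81*c^2*Q^3 - 67*c^2*Q^2 - 24*c*Q^5 + 123*c*Q^4
       - 251*c*Q^3 + 152*c*Q^2 - 10*Q^6 + 83*Q^5 - 235*Q^4 + 298*Q^3 - 136*Q^2,
     17*c^2*Q^4 - 17*c^2*Q^3 + 9*c*Q^5 - 67*c*Q^4 + 58*c*Q^3 + 9*Q^6 - 45*Q^5 + 98*Q^4 - 62*Q^3,
     - 10*c*Q^5 + 10*c*Q^4 - 2*Q^6 + 18*Q^5 - 16*Q^4] ! i"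

definition delsarte_tail2 :: "real \<Rightarrow> real \<Rightarrow> nat \<Rightarrow> real" where
  "delsarte_tail2 Q c i =
    [18*c^2*Q^4 - 42*c^2*Q^3 + 24*c^2*Q^2 + 18*c*Q^5 - 114*c*Q^4 + 192*c*Q^3 - 96*c*Q^2 + 14*Q^6
       - 100*Q^5 + 266*Q^4 - 300*Q^3 + 120*Q^2,
     2*c^2*Q^4 - 2*c^2*Q^3 - 34*c*Q^5 + 74*c*Q^4 - 40*c*Q^3 - 12*Q^6 + 90*Q^5 - 158*Q^4 + 80*Q^3,
     - 4*c*Q^5 + 4*c*Q^4 + 14*Q^6 - 28*Q^5 + 14*Q^4] ! i"

context
  fixes Q c n r D :: real
  assumes inverse: "Q * r = 1"
    and param: "delsarte_param Q c n D"
begin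

lemma delsarte_coeff0_param:
  "Q^4 * (Q - 1)^2 * delsarte_coeff0 n r D
     = 2 * Q^4 * (Q - 1) * (Q - c) * D^4 + (\<Sum>i\<le>3. delsarte_tail0 Q c i * D^i)"
  using inverse param unfolding delsarte_param_def delsarte_coeff0_def delsarte_tail0_def sum_atMost_3
  by simp algebra

lemma delsarte_coeff1_param:
  "Q^4 * (Q - 1)^2 * delsarte_coeff1 n r D
     = 2 * Q^5 * (Q - 1) * D^4 + (\<Sum>i\<le>3. delsarte_tail1 Q c i * D^i)"
  using inverse param unfolding delsarte_param_def delsarte_coeff1_def delsarte_tail1_def sum_atMost_3
  by simp algebra

lemma delsarte_coeff2_param:
  "Q^4 * (Q - 1)^2 * (2 * delsarte_coeff2 n r D)
     = 2 * Q^5 * (Q - 1) * D^3 + (\<Sum>i\<le>2. delsarte_tail2 Q c i * D^i)"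
  using inverse param unfolding delsarte_param_def delsarte_coeff2_def delsarte_tail2_def sum_atMost_2
  by simp algebra

end

lemma delsarte_tails_bounded:
  fixes Q :: real
  assumes "1 \<le> Q"
  obtains K where "\<And>c. 0 \<le> c \<Longrightarrow> c \<le> Q - 1 \<Longrightarrow>
    (\<Sum>i\<le>3. \<bar>delsarte_tail0 Q c i\<bar>) \<le> K \<and> (\<Sum>i\<le>3. \<bar>delsarte_tail1 Q c i\<bar>) \<le> K
      \<and> (\<Sum>i\<le>2. \<bar>delsarte_tail2 Q c i\<bar>) \<le> K"
proof -
  define g where "g c = (\<Sum>i\<le>3. \<bar>delsarte_tail0 Q c i\<bar>) + (\<Sum>i\<le>3. \<bar>delsarte_tail1 Q c i\<bar>)
      + (\<Sum>i\<le>2. \<bar>delsarte_tail2 Q c i\<bar>)" for c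
  have "continuous_on {0..Q - 1} g"
    unfolding g_def delsarte_tail0_def delsarte_tail1_def delsarte_tail2_def sum_atMost_2 sum_atMost_3
    by (simp del: power_Suc; intro continuous_intros)
  then obtain c0 where "\<forall>c\<in>{0..Q - 1}. g c \<le> g c0"
    using continuous_attains_sup[OF compact_Icc] assms by (metis atLeastAtMost_iff diff_ge_0_iff_ge empty_iff)
  moreover have "(\<Sum>i\<le>3. \<bar>delsarte_tail0 Q c i\<bar>) \<le> g c" "(\<Sum>i\<le>3. \<bar>delsarte_tail1 Q c i\<bar>) \<le> g c"
    "(\<Sum>i\<le>2. \<bar>delsarte_tail2 Q c i\<bar>) \<le> g c" for c
    unfolding g_def by (simp_all add: sum_nonneg)
  ultimately show thesis
    using that[of "g c0"] by (meson atLeastAtMost_iff order_trans)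
qed

lemma leading_coeff_ge_1:
  fixes Q :: real
  assumes "2 \<le> Q"
  shows "1 \<le> 2 * Q^5 * (Q - 1)"
proof -
  have "2 * 2^5 * 1 \<le> 2 * Q^5 * (Q - 1)"
    using assms by (intro mult_mono power_mono) auto
  then show ?thesis
    by (rule order_trans[rotated]) simp
qed

context
  fixes Q c n r D :: real
  assumes Q: "2 \<le> Q"
    and inverse: "Q * r = 1"
    and param: "delsarte_param Q c n D"
    and D: "1 \<le> D"
begin

lemma delsarte_coeff1_nonneg:
  assumes "(\<Sum>i\<le>3. \<bar>delsarte_tail1 Q c i\<bar>) \<le> D"
  shows "0 \<le> delsarte_coeff1 n r D"
proof -
  have "0 \<le> 2 * Q^5 * (Q - 1) * D^Suc 3 + (\<Sum>i\<le>3. delsarte_tail1 Q c i * D^i)"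
    using leading_coeff_ge_1[OF Q] D assms by (rule dominant_term_nonneg)
  then have "0 \<le> Q^4 * (Q - 1)^2 * delsarte_coeff1 n r D"
    using delsarte_coeff1_param[OF inverse param] by simp
  moreover have "0 < Q^4 * (Q - 1)^2"
    using Q by simp
  ultimately show ?thesis
    by (simp add: zero_le_mult_iff)
qed

lemma delsarte_coeff2_nonneg:
  assumes "(\<Sum>i\<le>2. \<bar>delsarte_tail2 Q c i\<bar>) \<le> D"
  shows "0 \<le> delsarte_coeff2 n r D"
proof -
  have "0 \<le> 2 * Q^5 * (Q - 1) * D^Suc 2 + (\<Sum>i\<le>2. delsarte_tail2 Q c i * D^i)"
    using leading_coeff_ge_1[OF Q] D assms by (rule dominant_term_nonneg)
  then have "0 \<le> Q^4 * (Q - 1)^2 * (2 * delsarte_coeff2 n r D)"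
    using delsarte_coeff2_param[OF inverse param] by simp
  moreover have "0 < Q^4 * (Q - 1)^2"
    using Q by simp
  ultimately show ?thesis
    by (simp add: zero_le_mult_iff)
qed

lemma delsarte_coeff0_lower_bound:
  assumes c: "1 \<le> Q - c" and K: "(\<Sum>i\<le>3. \<bar>delsarte_tail0 Q c i\<bar>) \<le> K"
    and W: "W \<le> (1 + \<epsilon>) * (D^4 - K * D^3)" and "0 < \<epsilon>"
  shows "2 * (Q - c) * W \<le> (1 + \<epsilon>) * (Q - 1) * delsarte_coeff0 n r D"
proof -
  define m where "m = 2 * Q^4 * (Q - 1) * (Q - c)"
  define P where "P = Q^4 * (Q - 1)^2 * delsarte_coeff0 n r D"
  have "2 * 2^4 * 1 * 1 \<le> m"
    unfolding m_def using Q c by (intro mult_mono power_mono) auto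
  then have m: "1 \<le> m"
    by (rule order_trans[rotated]) simp
  have "0 \<le> K"
    using K by (meson order_trans sum_nonneg abs_ge_zero)
  then have mK: "1 * (K * D^3) \<le> m * (K * D^3)"
    using m D by (intro mult_right_mono) auto
  have "- K * D^3 \<le> - (\<Sum>i\<le>3. \<bar>delsarte_tail0 Q c i\<bar>) * D^3"
    using K D by (intro mult_right_mono) auto
  then have lower: "m * D^4 - K * D^3 \<le> P"
    using delsarte_coeff0_param[OF inverse param] sum_powers_lower_bound[OF D, of "delsarte_tail0 Q c" 3]
    unfolding m_def P_def by linarith
  have "m * W \<le> m * ((1 + \<epsilon>) * (D^4 - K * D^3))"
    using W m by (intro mult_left_mono) auto
  also have "\<dots> = (1 + \<epsilon>) * (m * D^4 - m * (K * D^3))"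
    by algebra
  also have "\<dots> \<le> (1 + \<epsilon>) * P"
    using mK lower \<open>0 < \<epsilon>\<close> by (intro mult_left_mono) auto
  finally have "m * W \<le> (1 + \<epsilon>) * P" .
  moreover have "m * W = (Q^4 * (Q - 1)) * (2 * (Q - c) * W)"
    and "(1 + \<epsilon>) * P = (Q^4 * (Q - 1)) * ((1 + \<epsilon>) * (Q - 1) * delsarte_coeff0 n r D)"
    unfolding m_def P_def by algebra+
  ultimately show ?thesis
    using Q by (simp add: mult_le_cancel_left_pos)
qed

end

text \<open>The term (D + 2)^4 + (D + 2)^2 D bounds F(n - n/q) / (q (q - 1) n^2),
  see delsarte_poly_at_top.\<close>
definition delsarte_certificate :: "real \<Rightarrow> real \<Rightarrow> real \<Rightarrow> real \<Rightarrow> real \<Rightarrow> bool" where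
  "delsarte_certificate \<epsilon> Q c n D \<longleftrightarrow>
     0 \<le> delsarte_coeff1 n (1 / Q) D \<and> 0 \<le> delsarte_coeff2 n (1 / Q) D \<and>
     2 * (Q - c) * ((D + 2)^4 + (D + 2)^2 * D) \<le> (1 + \<epsilon>) * (Q - 1) * delsarte_coeff0 n (1 / Q) D"

lemma delsarte_certificate_eventually:
  fixes Q \<epsilon> :: real
  assumes Q: "2 \<le> Q" and \<epsilon>: "0 < \<epsilon>"
  obtains D0 where "0 \<le> D0"
    and "\<And>n D c. delsarte_param Q c n D \<Longrightarrow> 0 \<le> c \<Longrightarrow> c \<le> Q - 1 \<Longrightarrow> D0 \<le> D \<Longrightarrow>
      delsarte_certificate \<epsilon> Q c n D"
proof -
  have "1 \<le> Q"
    using Q by simp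
  obtain K0 where K0: "\<And>c. 0 \<le> c \<Longrightarrow> c \<le> Q - 1 \<Longrightarrow>
      (\<Sum>i\<le>3. \<bar>delsarte_tail0 Q c i\<bar>) \<le> K0 \<and> (\<Sum>i\<le>3. \<bar>delsarte_tail1 Q c i\<bar>) \<le> K0
      \<and> (\<Sum>i\<le>2. \<bar>delsarte_tail2 Q c i\<bar>) \<le> K0"
    using delsarte_tails_bounded[OF \<open>1 \<le> Q\<close>] by blast
  define K where "K = max 0 K0"
  define D0 where "D0 = max (K + 1) ((89 + (1 + \<epsilon>) * K) / \<epsilon>)"
  show thesis
  proof (rule that)
    show "0 \<le> D0"
      unfolding D0_def K_def by simp
    fix n D c :: real
    assume param: "delsarte_param Q c n D" and c: "0 \<le> c" "c \<le> Q - 1" and "D0 \<le> D"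
    then have D: "1 \<le> D" "K \<le> D" "(89 + (1 + \<epsilon>) * K) / \<epsilon> \<le> D"
      unfolding D0_def K_def by auto
    have inverse: "Q * (1 / Q) = 1"
      using Q by simp
    have tails: "(\<Sum>i\<le>3. \<bar>delsarte_tail0 Q c i\<bar>) \<le> K" "(\<Sum>i\<le>3. \<bar>delsarte_tail1 Q c i\<bar>) \<le> K"
      "(\<Sum>i\<le>2. \<bar>delsarte_tail2 Q c i\<bar>) \<le> K"
      using K0[OF c] unfolding K_def by auto
    have margin: "(D + 2)^4 + (D + 2)^2 * D \<le> (1 + \<epsilon>) * (D^4 - K * D^3)"
      using \<epsilon> D unfolding K_def by (intro quartic_margin) auto
    show "delsarte_certificate \<epsilon> Q c n D"
      unfolding delsarte_certificate_def
    proof (intro conjI)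
      show "0 \<le> delsarte_coeff1 n (1 / Q) D"
        using tails(2) D(2) by (intro delsarte_coeff1_nonneg[OF Q inverse param D(1)]) linarith
      show "0 \<le> delsarte_coeff2 n (1 / Q) D"
        using tails(3) D(2) by (intro delsarte_coeff2_nonneg[OF Q inverse param D(1)]) linarith
      show "2 * (Q - c) * ((D + 2)^4 + (D + 2)^2 * D) \<le> (1 + \<epsilon>) * (Q - 1) * delsarte_coeff0 n (1 / Q) D"
        using c(2) by (intro delsarte_coeff0_lower_bound[OF Q inverse param D(1) _ tails(1) margin \<epsilon>]) simp
    qed
  qed
qed

lemma delsarte_param_sqrt:
  fixes Q c n :: real
  assumes Q: "2 \<le> Q" and n: "2 \<le> n" and c: "0 \<le> c"
  defines "D \<equiv> (sqrt (Q^2 + 4 * (Q - 1) * (n - 2)) + 2 * c + Q - 4) / (2 * Q)"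
  shows "delsarte_param Q c n D"
    and "sqrt ((Q - 1) * n) / Q - 2 \<le> D"
    and "n * (Q - 1) / Q^2 \<le> (D + 2)^2"
proof -
  define S where "S = sqrt (Q^2 + 4 * (Q - 1) * (n - 2))"
  define y where "y = sqrt ((Q - 1) * n)"
  have S2: "S^2 = Q^2 + 4 * (Q - 1) * (n - 2)"
    unfolding S_def using Q n by (intro real_sqrt_pow2) auto
  have y2: "y^2 = (Q - 1) * n"
    unfolding y_def using Q n by (intro real_sqrt_pow2) auto
  have D_S: "D = (S + 2 * c + Q - 4) / (2 * Q)"
    unfolding D_def S_def ..
  then have "2 * Q * D - (2 * c + Q - 4) = S"
    using Q by (simp add: field_simps)
  then show "delsarte_param Q c n D"
    unfolding delsarte_param_def using S2 by (simp add: algebra_simps)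
  have "2 * y - 2 * Q \<le> S"
  proof (cases "Q \<le> y")
    case True
    have "Q * Q \<le> Q * y" "2 * Q \<le> Q * Q"
      using True Q by (intro mult_left_mono mult_right_mono; simp)+
    moreover have "(2 * y - 2 * Q)^2 = 4 * y^2 - 8 * (Q * y) + 4 * (Q * Q)"
      by algebra
    moreover have "Q^2 + 4 * (Q - 1) * (n - 2) = Q * Q + 4 * (Q * n) - 4 * n - 8 * Q + 8"
      by algebra
    moreover have "y^2 = Q * n - n"
      using y2 by (simp add: algebra_simps)
    ultimately have "(2 * y - 2 * Q)^2 \<le> Q^2 + 4 * (Q - 1) * (n - 2)"
      using Q by linarith
    then show ?thesis
      unfolding S_def by (rule real_le_rsqrt)
  next
    case False
    have "0 \<le> S"
      unfolding S_def using Q n by simp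
    with False show ?thesis
      by linarith
  qed
  then have "(2 * y - 2 * Q + Q - 4) / (2 * Q) \<le> D"
    unfolding D_S using Q c by (intro divide_right_mono) auto
  moreover have "(2 * y - 2 * Q + Q - 4) / (2 * Q) = y / Q - 1 / 2 - 2 / Q"
    using Q by (simp add: field_simps)
  moreover have "2 / Q \<le> 1"
    using Q by simp
  ultimately show growth: "sqrt ((Q - 1) * n) / Q - 2 \<le> D"
    unfolding y_def by linarith
  have "(sqrt ((Q - 1) * n) / Q)^2 \<le> (D + 2)^2"
    using growth Q n by (intro power_mono) auto
  then show "n * (Q - 1) / Q^2 \<le> (D + 2)^2"
    using Q n by (simp add: power_divide mult.commute)
qed

lemma le_sqrt_parameter:
  fixes Q n D M :: real
  assumes Q: "2 \<le> Q" and M: "Q^2 * (M + 2)^2 / (Q - 1) \<le> n" and D: "sqrt ((Q - 1) * n) / Q - 2 \<le> D"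
  shows "M \<le> D"
proof -
  have "(Q * (M + 2))^2 \<le> (Q - 1) * n"
    using M Q by (simp add: pos_divide_le_eq power_mult_distrib mult.commute)
  then have "Q * (M + 2) \<le> sqrt ((Q - 1) * n)"
    by (rule real_le_rsqrt)
  then have "M + 2 \<le> sqrt ((Q - 1) * n) / Q"
    using Q by (simp add: pos_le_divide_eq mult.commute)
  then show ?thesis
    using D by linarith
qed

lemma delsarte_poly_at_top:
  fixes Q n D :: real
  assumes Q: "1 \<le> Q" and n: "0 \<le> n" and D: "0 \<le> D" and X: "n * (Q - 1) / Q^2 \<le> (D + 2)^2"
  defines "T \<equiv> n - n / Q"
  shows "(T + n * (1 / Q)) * (T - D) * (T + D)^2 \<le> Q * (Q - 1) * n^2 * ((D + 2)^4 + (D + 2)^2 * D)"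
proof -
  define X where "X = n * (Q - 1) / Q^2"
  have T: "T = Q * X"
    unfolding T_def X_def using Q by (simp add: field_simps power2_eq_square)
  have "0 \<le> X"
    unfolding X_def using Q n by simp
  have "(T + n * (1 / Q)) * (T - D) * (T + D)^2 = n * ((T^2 - D^2) * (T + D))"
    unfolding T_def using Q by (simp add: field_simps power2_eq_square)
  also have "\<dots> \<le> n * (T^2 * (T + D))"
    using n D \<open>0 \<le> X\<close> Q unfolding T by (intro mult_left_mono mult_right_mono) auto
  also have "\<dots> = Q * (Q - 1) * n^2 * (X^2 + X * D / Q)"
    unfolding T X_def using Q by (simp add: field_simps power2_eq_square)
  also have "\<dots> \<le> Q * (Q - 1) * n^2 * ((D + 2)^4 + (D + 2)^2 * D)"
  proof -
    have "X^2 \<le> ((D + 2)^2)^2"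
      using X \<open>0 \<le> X\<close> unfolding X_def by (intro power_mono) auto
    moreover have "X * D / Q \<le> X * D / 1"
      using Q \<open>0 \<le> X\<close> D by (intro divide_left_mono) auto
    moreover have "X * D \<le> (D + 2)^2 * D"
      using X D unfolding X_def by (intro mult_right_mono) auto
    ultimately show ?thesis
      using Q n by (intro mult_left_mono) (auto simp flip: power_mult)
  qed
  finally show ?thesis .
qed

lemma distance_condition_iff:
  assumes "x \<in> hamming_space q n" "0 < n"
  shows "1 - 2 * real (hamming_dist x y) / real n \<le> s \<longleftrightarrow>
    centred_agreements q n x y \<le> real n * (1 + s) / 2 - real n / real q"
  using assms by (simp add: hamming_dist_eq_agreements centred_agreements_eq field_simps)

lemma A_code_attained:
  obtains C where "C \<subseteq> hamming_space q n"
    and "\<forall>x\<in>C. \<forall>y\<in>C. x \<noteq> y \<longrightarrow> 1 - 2 * real (hamming_dist x y) / real n \<le> s"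
    and "A_code q n s = card C"
proof -
  define Cs where "Cs = {card C | C. C \<subseteq> hamming_space q n \<and>
      (\<forall>x\<in>C. \<forall>y\<in>C. x \<noteq> y \<longrightarrow> 1 - 2 * real (hamming_dist x y) / real n \<le> s)}"
  have "Cs \<subseteq> card ` Pow (hamming_space q n)"
    unfolding Cs_def by auto
  then have "finite Cs"
    using finite_hamming_space by (meson finite_Pow_iff finite_imageI finite_subset)
  moreover have "Cs \<noteq> {}"
    unfolding Cs_def by auto
  ultimately have "A_code q n s \<in> Cs"
    unfolding A_code_def Cs_def[symmetric] by (rule Max_in)
  then show thesis
    using that unfolding Cs_def by auto
qed

lemma card_code_le_delsarte:
  fixes q n :: nat and c D \<epsilon> :: real
  defines "Q \<equiv> real q"
  assumes q: "2 \<le> q" and C: "C \<subseteq> hamming_space q n"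
    and far: "\<And>x y. x \<in> C \<Longrightarrow> y \<in> C \<Longrightarrow> x \<noteq> y \<Longrightarrow> centred_agreements q n x y \<le> D"
    and D: "0 \<le> D" and X: "real n * (Q - 1) / Q^2 \<le> (D + 2)^2"
    and cert: "delsarte_certificate \<epsilon> Q c (real n) D"
    and c: "c < Q" and \<epsilon>: "0 < \<epsilon>"
  shows "real (card C) \<le> (1 + \<epsilon>) * (Q * (Q - 1)^2 * (real n)^2 / (2 * (Q - c)))"
proof -
  define W where "W = (D + 2)^4 + (D + 2)^2 * D"
  have coeff1: "0 \<le> delsarte_coeff1 (real n) (1 / Q) D"
    and coeff2: "0 \<le> delsarte_coeff2 (real n) (1 / Q) D"
    and coeff0: "2 * (Q - c) * W \<le> (1 + \<epsilon>) * (Q - 1) * delsarte_coeff0 (real n) (1 / Q) D"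
    using cert unfolding delsarte_certificate_def W_def by auto
  define F where "F t = (t + real n * (1 / Q)) * (t - D) * (t + D)^2" for t
  have Q: "2 \<le> Q"
    unfolding Q_def using q by simp
  have "0 \<le> delsarte_coeff3 (real n) (1 / Q) D"
    using Q D by (intro delsarte_coeff3_nonneg) auto
  moreover have "F (centred_agreements q n x y) \<le> 0" if "x \<in> C" "y \<in> C" "x \<noteq> y" for x y
  proof -
    have "0 \<le> centred_agreements q n x y + real n * (1 / Q)"
      unfolding centred_agreements_eq Q_def by simp
    moreover have "centred_agreements q n x y - D \<le> 0"
      using far[OF that] by simp
    ultimately show ?thesis
      unfolding F_def by (intro mult_nonpos_nonneg mult_nonneg_nonpos) auto
  qed
  ultimately have "real (card C) * real (card C) * delsarte_coeff0 (real n) (1 / Q) D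
      \<le> real (card C) * F (real n - real n / Q)"
    using C coeff1 coeff2 delsarte_poly_expansion[of _ "real n" "1 / real q" D] unfolding F_def Q_def
    by (intro delsarte_bound[where ?f0.0 = "delsarte_coeff0 (real n) (1 / real q) D"
          and ?f1.0 = "delsarte_coeff1 (real n) (1 / real q) D" and ?f2.0 = "delsarte_coeff2 (real n) (1 / real q) D"
          and ?f3.0 = "delsarte_coeff3 (real n) (1 / real q) D" and ?f4.0 = 1]) auto
  also have "\<dots> \<le> real (card C) * (Q * (Q - 1) * (real n)^2 * W)"
    using delsarte_poly_at_top[of Q "real n" D] Q D X unfolding F_def W_def
    by (intro mult_left_mono) auto
  finally have "real (card C) * (real (card C) * delsarte_coeff0 (real n) (1 / Q) D)
      \<le> real (card C) * (Q * (Q - 1) * (real n)^2 * W)"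
    by (simp only: mult.assoc)
  moreover have "0 < real (card C)" if "C \<noteq> {}"
    using that C finite_hamming_space by (simp add: card_gt_0_iff finite_subset)
  ultimately have lp: "real (card C) * delsarte_coeff0 (real n) (1 / Q) D \<le> Q * (Q - 1) * (real n)^2 * W"
    if "C \<noteq> {}"
    using that by (simp add: mult_le_cancel_left_pos)
  have "0 < W"
    unfolding W_def using D by (intro add_pos_nonneg) auto
  show ?thesis
  proof (cases "C = {}")
    case False
    have "real (card C) * (2 * (Q - c)) * W \<le> real (card C) * ((1 + \<epsilon>) * (Q - 1) * delsarte_coeff0 (real n) (1 / Q) D)"
      using coeff0 by (simp add: mult.assoc mult_left_mono)
    also have "\<dots> \<le> (1 + \<epsilon>) * (Q - 1) * (Q * (Q - 1) * (real n)^2 * W)"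
      using lp[OF False] \<epsilon> Q by (simp add: mult_left_mono mult.left_commute)
    finally have "real (card C) * (2 * (Q - c)) \<le> (1 + \<epsilon>) * (Q * (Q - 1)^2 * (real n)^2)"
      using \<open>0 < W\<close> by (simp add: power2_eq_square mult_ac)
    then show ?thesis
      using c by (simp add: field_simps)
  qed (use \<epsilon> Q c in simp)
qed

lemma A_code_le_of_certificate:
  fixes q n :: nat and c D s \<epsilon> :: real
  defines "Q \<equiv> real q"
  assumes q: "2 \<le> q" and n: "0 < n" and s: "real n * (1 + s) / 2 - real n / Q = D"
    and D: "0 \<le> D" and X: "real n * (Q - 1) / Q^2 \<le> (D + 2)^2"
    and cert: "delsarte_certificate \<epsilon> Q c (real n) D" and c: "c < Q" and \<epsilon>: "0 < \<epsilon>"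
  shows "real (A_code q n s) \<le> (1 + \<epsilon>) * (Q * (Q - 1)^2 * (real n)^2 / (2 * (Q - c)))"
proof -
  obtain C where C: "C \<subseteq> hamming_space q n" and A: "A_code q n s = card C"
    and code: "\<forall>x\<in>C. \<forall>y\<in>C. x \<noteq> y \<longrightarrow> 1 - 2 * real (hamming_dist x y) / real n \<le> s"
    by (rule A_code_attained)
  have far: "centred_agreements q n x y \<le> D" if "x \<in> C" "y \<in> C" "x \<noteq> y" for x y
    using code distance_condition_iff[of x q n y s] that C n s unfolding Q_def by auto
  show ?thesis
    unfolding A Q_def using q C far D X cert c \<epsilon> unfolding Q_def by (rule card_code_le_delsarte)
qed

lemma A_code_eventually_le:
  fixes q :: nat and \<epsilon> :: real
  assumes q: "2 \<le> q" and \<epsilon>: "0 < \<epsilon>"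
  shows "\<exists>N. \<forall>n\<ge>N. \<forall>c::real. n \<ge> 3 \<longrightarrow> 0 \<le> c \<longrightarrow>
    c < (real q - 1) * (1 - 2 / (sqrt (real q ^ 2 + 4 * (real q - 1) * (real n - 2))
                                 + sqrt (real q ^ 2 + 4 * (real q - 1) * (real n - 3)))) \<longrightarrow>
    real (A_code q n ((sqrt (real q ^ 2 + 4 * (real q - 1) * (real n - 2)) - real n * (real q - 2)
                         + 2 * c + real q - 4) / (real n * real q)))
      \<le> (1 + \<epsilon>) * (real q * (real q - 1)^2 * (real n)^2 / (2 * (real q - c)))"
proof -
  define Q where "Q = real q"
  have Q: "2 \<le> Q"
    unfolding Q_def using q by simp
  obtain D0 where "0 \<le> D0" and certificate: "\<And>n D c. delsarte_param Q c n D \<Longrightarrow>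
      0 \<le> c \<Longrightarrow> c \<le> Q - 1 \<Longrightarrow> D0 \<le> D \<Longrightarrow> delsarte_certificate \<epsilon> Q c n D"
    using delsarte_certificate_eventually[OF Q \<epsilon>] by blast
  show ?thesis
    unfolding Q_def[symmetric]
  proof (intro exI[of _ "nat \<lceil>Q^2 * (D0 + 2)^2 / (Q - 1)\<rceil>"] allI impI)
    fix n :: nat and c :: real
    define S1 where "S1 = sqrt (Q^2 + 4 * (Q - 1) * (real n - 2))"
    define S2 where "S2 = sqrt (Q^2 + 4 * (Q - 1) * (real n - 3))"
    define D where "D = (S1 + 2 * c + Q - 4) / (2 * Q)"
    assume "nat \<lceil>Q^2 * (D0 + 2)^2 / (Q - 1)\<rceil> \<le> n" and "3 \<le> n" and c0: "0 \<le> c"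
      and c_less: "c < (Q - 1) * (1 - 2 / (S1 + S2))"
    then have n_large: "Q^2 * (D0 + 2)^2 / (Q - 1) \<le> real n" and n: "2 \<le> real n" "3 \<le> real n"
      by (simp_all add: nat_ceiling_le_eq)
    have "0 \<le> S1" "0 \<le> S2"
      unfolding S1_def S2_def using Q n
      by (intro real_sqrt_ge_zero add_nonneg_nonneg mult_nonneg_nonneg; simp)+
    then have "(Q - 1) * (1 - 2 / (S1 + S2)) \<le> Q - 1"
      using Q by (intro mult_left_le) auto
    with c0 c_less have c: "0 \<le> c" "c \<le> Q - 1"
      by linarith+
    note param = delsarte_param_sqrt[OF Q n(1) c(1), folded S1_def, folded D_def]
    have "D0 \<le> D"
      using le_sqrt_parameter[OF Q n_large param(2)] .
    have "real n * (1 + (S1 - real n * (Q - 2) + 2 * c + Q - 4) / (real n * Q)) / 2 - real n / Q = D"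
      unfolding D_def using Q n by (simp add: field_simps)
    with q n param(3) certificate[OF param(1) c \<open>D0 \<le> D\<close>] \<open>0 \<le> D0\<close> \<open>D0 \<le> D\<close> c \<epsilon>
    show "real (A_code q n ((S1 - real n * (Q - 2) + 2 * c + Q - 4) / (real n * Q)))
        \<le> (1 + \<epsilon>) * (Q * (Q - 1)^2 * (real n)^2 / (2 * (Q - c)))"
      unfolding Q_def by (intro A_code_le_of_certificate) auto
  qed
qed

theorem theorem6:
  fixes q :: nat
  assumes "q \<ge> 2"
  shows "\<forall>\<epsilon>>0. \<exists>N. \<forall>n\<ge>N. \<forall>c::real.
     (let S1 = sqrt (real q ^ 2 + 4 * (real q - 1) * (real n - 2));
          S2 = sqrt (real q ^ 2 + 4 * (real q - 1) * (real n - 3));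
          s = (S1 - real n * (real q - 2) + 2 * c + real q - 4) / (real n * real q)
      in n \<ge> 3 \<and> 0 \<le> c \<and> c < (real q - 1) * (1 - 2 / (S1 + S2)) \<and> s \<in> T_set n \<longrightarrow>
         real (A_code q n s) \<le> (1 + \<epsilon>) * (real q * (real q - 1)^2 * (real n)^2 / (2 * (real q - c))))"
  using A_code_eventually_le[OF assms] unfolding Let_def by blast

end
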